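(* In the single-hop model described in the context, with $q:=P(SIR_1<\beta)$, $$P_s\ \ge\ P\big(SIR_{D+1}\ge\beta\ \big|\ SIR_1<\beta,\dots,SIR_D<\beta\big)\cdot\frac{1-(pq+1-p)^{D+1}}{1-q}$$ (for $D=0$ the conditional probability is the unconditional $P(SIR_1\ge\beta)$).
   Context: Single-hop model. Fix $\alpha>2$, $\beta>0$, $d>0$, $p\in(0,1]$, $\lambda>0$ and an integer $D\ge 0$. Let $\Phi$ be a homogeneous Poisson point process on $\mathbb{R}^2$ of intensity $\lambda$ (the same realization in every time slot); the typical receiver is at the origin and its transmitter at distance $d$. For each time slot $t\in\{1,2,\dots\}$ and each $x\in\Phi$ let $\mathbf 1_{x,t}\sim\mathrm{Bernoulli}(p)$, $G_{x,t}\sim\mathrm{Exp}(1)$, $H_t\sim\mathrm{Exp}(1)$, and $A_t\sim\mathrm{Bernoulli}(p)$, all mutually independent and independent of $\Phi$. Define $SIR_t:=\dfrac{d^{-\alpha}H_t}{\sum_{x\in\Phi}\mathbf 1_{x,t}|x|^{-\alpha}G_{x,t}}$ and $P_s:=P(\exists\, t\le D+1:\ A_t=1,\ SIR_t\ge\beta)$. *)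

theory Defs
  imports "HOL-Probability.Probability"
begin

text \<open>The points of the Poisson process are given by an (a.s. injective) enumeration
  X n, so that Phi(w) = range (\<lambda>n. X n w).  Marks are indexed by (point index, slot).\<close>

definition pp_count :: "(nat \<Rightarrow> 'a \<Rightarrow> real \<times> real) \<Rightarrow> (real \<times> real) set \<Rightarrow> 'a \<Rightarrow> nat" where
  "pp_count X B w = card {n. X n w \<in> B}"

definition poisson_pp :: "'a measure \<Rightarrow> real \<Rightarrow> (nat \<Rightarrow> 'a \<Rightarrow> real \<times> real) \<Rightarrow> bool" where
  "poisson_pp M lam X \<longleftrightarrow>
     (\<forall>n. X n \<in> borel_measurable M) \<and>
     (AE w in M. inj (\<lambda>n. X n w)) \<and>
     (\<forall>B. B \<in> sets borel \<and> bounded B \<longrightarrow>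
        pp_count X B \<in> measurable M (count_space UNIV) \<and>
        (\<forall>k. measure M {w \<in> space M. pp_count X B w = k} =
              exp (- (lam * measure lborel B)) * (lam * measure lborel B) ^ k / fact k)) \<and>
     (\<forall>(m::nat) B. (\<forall>i<m. B i \<in> sets borel \<and> bounded (B i)) \<and> disjoint_family_on B {..<m} \<longrightarrow>
        prob_space.indep_vars M (\<lambda>_. count_space UNIV) (\<lambda>i w. pp_count X (B i) w) {..<m})"

definition gen_events :: "'a measure \<Rightarrow> 'b measure \<Rightarrow> ('a \<Rightarrow> 'b) \<Rightarrow> 'a set set" where
  "gen_events M N f = {f -` B \<inter> space M | B. B \<in> sets N}"

datatype rv_idx = Proc | IndI nat nat | GI nat nat | HI nat | AI nat

text \<open>The single-hop model: Ind n t = indicator 1_{x,t}, G n t = fading G_{x,t} for the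
  point x = X n; H t, A t as in the paper.  All mutually independent and independent of Phi.\<close>
definition single_hop_model ::
  "'a measure \<Rightarrow> real \<Rightarrow> real \<Rightarrow> (nat \<Rightarrow> 'a \<Rightarrow> real \<times> real) \<Rightarrow> (nat \<Rightarrow> nat \<Rightarrow> 'a \<Rightarrow> bool)
   \<Rightarrow> (nat \<Rightarrow> nat \<Rightarrow> 'a \<Rightarrow> real) \<Rightarrow> (nat \<Rightarrow> 'a \<Rightarrow> real) \<Rightarrow> (nat \<Rightarrow> 'a \<Rightarrow> bool) \<Rightarrow> bool" where
  "single_hop_model M lam p X Ind G H A \<longleftrightarrow>
     prob_space M \<and> poisson_pp M lam X \<and>
     (\<lambda>w n. X n w) \<in> measurable M (PiM UNIV (\<lambda>_. borel)) \<and>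
     (\<forall>n t. distr M (count_space UNIV) (Ind n t) = measure_pmf (bernoulli_pmf p)) \<and>
     (\<forall>n t. distributed M lborel (G n t) (\<lambda>x. ennreal (exponential_density 1 x))) \<and>
     (\<forall>t. distributed M lborel (H t) (\<lambda>x. ennreal (exponential_density 1 x))) \<and>
     (\<forall>t. distr M (count_space UNIV) (A t) = measure_pmf (bernoulli_pmf p)) \<and>
     (\<forall>n t. Ind n t \<in> measurable M (count_space UNIV)) \<and>
     (\<forall>t. A t \<in> measurable M (count_space UNIV)) \<and>
     prob_space.indep_sets M
       (\<lambda>i. case i of
          Proc \<Rightarrow> gen_events M (PiM UNIV (\<lambda>_. borel)) (\<lambda>w n. X n w)
        | IndI n t \<Rightarrow> gen_events M (count_space UNIV) (Ind n t)
        | GI n t \<Rightarrow> gen_events M borel (G n t)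
        | HI t \<Rightarrow> gen_events M borel (H t)
        | AI t \<Rightarrow> gen_events M (count_space UNIV) (A t)) UNIV"

definition interference ::
  "real \<Rightarrow> (nat \<Rightarrow> 'a \<Rightarrow> real \<times> real) \<Rightarrow> (nat \<Rightarrow> nat \<Rightarrow> 'a \<Rightarrow> bool) \<Rightarrow> (nat \<Rightarrow> nat \<Rightarrow> 'a \<Rightarrow> real)
   \<Rightarrow> nat \<Rightarrow> 'a \<Rightarrow> ennreal" where
  "interference \<alpha> X Ind G t w =
     (\<Sum>n. ennreal (if Ind n t w then norm (X n w) powr (- \<alpha>) * G n t w else 0))"

definition SIR ::
  "real \<Rightarrow> real \<Rightarrow> (nat \<Rightarrow> 'a \<Rightarrow> real \<times> real) \<Rightarrow> (nat \<Rightarrow> nat \<Rightarrow> 'a \<Rightarrow> bool) \<Rightarrow> (nat \<Rightarrow> nat \<Rightarrow> 'a \<Rightarrow> real)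
   \<Rightarrow> (nat \<Rightarrow> 'a \<Rightarrow> real) \<Rightarrow> nat \<Rightarrow> 'a \<Rightarrow> ennreal" where
  "SIR \<alpha> d X Ind G H t w = ennreal (d powr (- \<alpha>) * H t w) / interference \<alpha> X Ind G t w"

end

theory Submission
  imports Defs
begin

text \<open>
  Write \<open>\<Phi>\<close> for the point process and \<open>Q(\<Phi>) = P(SIR\<^sub>t < \<beta> | \<Phi>)\<close> for the
  conditional failure probability of a slot.  Given \<open>\<Phi>\<close>, the slots \<open>t = 1, 2, \<dots>\<close> are
  independent and identically distributed (fresh ALOHA indicators, fadings and
  transmission decisions in every slot), so every probability in the theorem is a moment
  of the random variable \<open>Q(\<Phi>)\<close>:
    \<open>q = E Q\<close>,  \<open>P(no success in slots 1..D) = E Q\<^sup>D\<close>,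
    \<open>P(success in slot D+1, none before) = E (1-Q) Q\<^sup>D\<close>,
    \<open>1 - P\<^sub>s = E (1 - p + p Q)\<^sup>D\<^sup>+\<^sup>1\<close>.
  The theorem thereby reduces to an inequality between moments of a \<open>[0,1]\<close>-valued random
  variable, which is proved first (Section 1) from the correlation inequality
  \<open>E Q\<^sup>i (Q - k)(Q\<^sup>n - k\<^sup>n) \<ge> 0\<close>.
\<close>

section \<open>Moment inequalities for a [0,1]-valued random variable\<close>

text \<open>The affine map \<open>t \<mapsto> 1 - p + p t\<close> (probability of no delivery in a slot whose
  failure probability is \<open>t\<close>) maps \<open>[0,1]\<close> into itself.\<close>
lemma affine_unit_range:
  fixes p t :: real
  assumes "0 \<le> p" "p \<le> 1" "0 \<le> t" "t \<le> 1"
  shows "0 \<le> 1 - p + p * t" and "1 - p + p * t \<le> 1"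
proof -
  have "0 \<le> p * t" "p * t \<le> p" using assms by (auto intro: mult_right_le_one_le)
  then show "0 \<le> 1 - p + p * t" "1 - p + p * t \<le> 1" using assms by auto
qed

definition moment :: "'a measure \<Rightarrow> ('a \<Rightarrow> real) \<Rightarrow> nat \<Rightarrow> real" where
  "moment M Q i = (\<integral>x. Q x ^ i \<partial>M)"

context prob_space
begin

context
  fixes Q :: "'a \<Rightarrow> real"
  assumes Q_meas[measurable]: "Q \<in> borel_measurable M"
    and Q_range: "\<And>x. x \<in> space M \<Longrightarrow> 0 \<le> Q x \<and> Q x \<le> 1"
begin

lemma integrable_fun_of_Q:
  fixes f :: "real \<Rightarrow> real"
  assumes "f \<in> borel_measurable borel" and "\<And>y. 0 \<le> y \<Longrightarrow> y \<le> 1 \<Longrightarrow> \<bar>f y\<bar> \<le> B"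
  shows "integrable M (\<lambda>x. f (Q x))"
  using Q_range assms
  by (intro integrable_const_bound[where B=B]) (auto intro: measurable_compose[OF Q_meas assms(1)])

lemma integrable_Q_power: "integrable M (\<lambda>x. Q x ^ i)"
  by (rule integrable_fun_of_Q[of "\<lambda>y. y ^ i" 1, simplified]) (auto intro!: power_le_one)

lemma integrable_mixed:
  assumes "0 \<le> p" "p \<le> 1"
  shows "integrable M (\<lambda>x. (1 - Q x) * (1 - p + p * Q x) ^ j * Q x ^ i)"
proof (rule integrable_fun_of_Q[of "\<lambda>t. (1 - t) * (1 - p + p * t) ^ j * t ^ i" 1, simplified])
  fix t :: real assume "0 \<le> t" "t \<le> 1"
  with affine_unit_range[OF assms this] show "\<bar>(1 - t) * (1 - p + p * t) ^ j * t ^ i\<bar> \<le> 1"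
    by (auto intro!: mult_le_one power_le_one simp: abs_mult)
qed

lemma moment_0: "moment M Q 0 = 1"
  by (simp add: moment_def prob_space)

lemma moment_nonneg: "0 \<le> moment M Q i"
  unfolding moment_def using Q_range by (intro integral_nonneg_AE) auto

lemma moment_Suc_le: "moment M Q (Suc i) \<le> moment M Q i"
  unfolding moment_def using Q_range
  by (intro integral_mono integrable_Q_power) (auto intro!: mult_left_le_one_le)

lemma moment_diff: "moment M Q i - moment M Q (Suc i) = (\<integral>x. (1 - Q x) * Q x ^ i \<partial>M)"
proof -
  have "moment M Q i - moment M Q (Suc i) = (\<integral>x. Q x ^ i - Q x ^ Suc i \<partial>M)"
    unfolding moment_def by (intro Bochner_Integration.integral_diff[symmetric] integrable_Q_power)
  also have "\<dots> = (\<integral>x. (1 - Q x) * Q x ^ i \<partial>M)"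
    by (intro Bochner_Integration.integral_cong) (auto simp: algebra_simps)
  finally show ?thesis .
qed

text \<open>Correlation inequality: \<open>Q - k\<close> and \<open>Q\<^sup>n - k\<^sup>n\<close> always have the same sign, so the
  expectation of \<open>Q\<^sup>i (Q - k)(Q\<^sup>n - k\<^sup>n)\<close> is nonnegative.  Expanded into moments this is
  the only inequality about the law of \<open>Q\<close> that the proof needs.\<close>
lemma moment_correlation:
  assumes k: "0 \<le> k"
  shows "0 \<le> moment M Q (i+n+1) - k * moment M Q (i+n) - k^n * moment M Q (i+1)
              + k^(n+1) * moment M Q i"
proof -
  have "0 \<le> (\<integral>x. Q x ^ i * ((Q x - k) * (Q x ^ n - k ^ n)) \<partial>M)"
  proof (intro integral_nonneg_AE AE_I2)
    fix x assume "x \<in> space M"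
    then have Qx: "0 \<le> Q x" using Q_range by auto
    have "0 \<le> (Q x - k) * (Q x ^ n - k ^ n)"
    proof (cases "Q x \<le> k")
      case True
      then have "Q x ^ n \<le> k ^ n" using Qx by (intro power_mono) auto
      then show ?thesis using True by (intro mult_nonpos_nonpos) auto
    next
      case False
      then have "k ^ n \<le> Q x ^ n" using k by (intro power_mono) auto
      then show ?thesis using False by (intro mult_nonneg_nonneg) auto
    qed
    then show "0 \<le> Q x ^ i * ((Q x - k) * (Q x ^ n - k ^ n))" using Qx by simp
  qed
  also have "(\<lambda>x. Q x ^ i * ((Q x - k) * (Q x ^ n - k ^ n))) =
      (\<lambda>x. Q x ^ (i+n+1) - k * Q x ^ (i+n) - k^n * Q x ^ (i+1) + k^(n+1) * Q x ^ i)"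
    by (auto simp: algebra_simps power_add)
  also have "(\<integral>x. Q x ^ (i+n+1) - k * Q x ^ (i+n) - k^n * Q x ^ (i+1) + k^(n+1) * Q x ^ i \<partial>M)
      = moment M Q (i+n+1) - k * moment M Q (i+n) - k^n * moment M Q (i+1) + k^(n+1) * moment M Q i"
    unfolding moment_def
    using integrable_Q_power[of "i+n+1"] integrable_Q_power[of "i+n"]
      integrable_Q_power[of "i+1"] integrable_Q_power[of i]
    by (simp del: power_Suc add: integrable_diff integrable_add integral_add integral_diff)
  finally show ?thesis .
qed

text \<open>Jensen's inequality for powers, as the case \<open>i = 0, k = E Q\<close> of the correlation
  inequality.\<close>
lemma moment_ge_power: "moment M Q 1 ^ n \<le> moment M Q n"
proof (induction n)
  case (Suc n)
  let ?q = "moment M Q 1"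
  have "?q * moment M Q n \<le> moment M Q (Suc n)"
    using moment_correlation[of ?q 0 n] moment_nonneg[of 1] moment_0 by (simp add: algebra_simps)
  moreover have "?q * ?q ^ n \<le> ?q * moment M Q n"
    using Suc.IH moment_nonneg[of 1] by (rule mult_left_mono)
  ultimately show ?case by simp
qed (simp add: moment_0)

text \<open>The ratios \<open>E Q\<^sup>i\<^sup>+\<^sup>1 / E Q\<^sup>i\<close> increase with \<open>i\<close>: take \<open>k\<close> equal to the \<open>i\<close>-th ratio in the
  correlation inequality.\<close>
lemma moment_ratio_mono:
  assumes "i \<le> D"
  shows "moment M Q (i+1) * moment M Q D \<le> moment M Q (D+1) * moment M Q i"
proof (cases "moment M Q i = 0")
  case True
  then have "moment M Q (i+1) = 0"
    using moment_Suc_le[of i] moment_nonneg[of "i+1"] by simp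
  then show ?thesis using True by simp
next
  case False
  then have pos: "0 < moment M Q i" using moment_nonneg[of i] by simp
  define k where "k = moment M Q (i+1) / moment M Q i"
  have "0 \<le> k" using pos moment_nonneg[of "i+1"] by (simp add: k_def)
  have k_mult: "k * moment M Q i = moment M Q (i+1)" using pos by (simp add: k_def)
  have "0 \<le> moment M Q (D+1) - k * moment M Q D - k^(D-i) * moment M Q (i+1)
             + k^(D-i+1) * moment M Q i"
    using moment_correlation[OF \<open>0 \<le> k\<close>, of i "D - i"] assms by simp
  also have "k^(D-i+1) * moment M Q i = k^(D-i) * moment M Q (i+1)"
    using k_mult by (simp add: mult.assoc)
  finally have "k * moment M Q i * moment M Q D \<le> moment M Q (D+1) * moment M Q i"
    using pos by (simp add: algebra_simps)
  then show ?thesis using k_mult by simp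
qed

lemma moment_decrement_lower:
  assumes "0 < moment M Q D" and "i \<le> D"
  shows "(moment M Q D - moment M Q (D+1)) / moment M Q D * moment M Q 1 ^ i
           \<le> moment M Q i - moment M Q (i+1)"
proof -
  define c where "c = (moment M Q D - moment M Q (D+1)) / moment M Q D"
  have "0 \<le> c" unfolding c_def using assms(1) moment_Suc_le[of D] by simp
  have "(moment M Q D - moment M Q (D+1)) * moment M Q i
          \<le> (moment M Q i - moment M Q (i+1)) * moment M Q D"
    using moment_ratio_mono[OF assms(2)] by (simp add: algebra_simps)
  then have "c * moment M Q i \<le> moment M Q i - moment M Q (i+1)"
    unfolding c_def using assms(1) by (simp add: field_simps)
  moreover have "c * moment M Q 1 ^ i \<le> c * moment M Q i"
    using moment_ge_power[of i] \<open>0 \<le> c\<close> by (rule mult_left_mono)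
  ultimately show ?thesis unfolding c_def by simp
qed

text \<open>The same lower bound propagates to the mixed expectations
  \<open>E (1-Q)(1-p+pQ)\<^sup>j Q\<^sup>i\<close> (expand one factor \<open>1-p+pQ\<close> and induct on \<open>j\<close>), with
  \<open>(E Q)\<^sup>i\<close> replaced by \<open>(1-p+p E Q)\<^sup>j (E Q)\<^sup>i\<close>.\<close>
lemma mixed_moment_lower:
  assumes pos: "0 < moment M Q D" and p: "0 \<le> p" "p \<le> 1"
  shows "i + j \<le> D \<Longrightarrow>
    (moment M Q D - moment M Q (D+1)) / moment M Q D * (1 - p + p * moment M Q 1) ^ j * moment M Q 1 ^ i
      \<le> (\<integral>x. (1 - Q x) * (1 - p + p * Q x) ^ j * Q x ^ i \<partial>M)"
proof (induction j arbitrary: i)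
  case 0
  then show ?case using moment_decrement_lower[OF pos, of i] moment_diff[of i] by simp
next
  case (Suc j)
  define c where "c = (moment M Q D - moment M Q (D+1)) / moment M Q D"
  define y where "y = 1 - p + p * moment M Q 1"
  define F where "F i x = (1 - Q x) * (1 - p + p * Q x) ^ j * Q x ^ i" for i x
  have intF: "integrable M (F i)" for i
    unfolding F_def using integrable_mixed[OF p] .
  have "(\<integral>x. (1 - Q x) * (1 - p + p * Q x) ^ Suc j * Q x ^ i \<partial>M)
      = (\<integral>x. (1 - p) * F i x + p * F (i+1) x \<partial>M)"
    by (intro Bochner_Integration.integral_cong) (auto simp: F_def algebra_simps)
  also have "\<dots> = (1 - p) * (\<integral>x. F i x \<partial>M) + p * (\<integral>x. F (i+1) x \<partial>M)"
    using intF[of i] intF[of "i+1"] by simp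
  also have "\<dots> \<ge> (1 - p) * (c * y ^ j * moment M Q 1 ^ i) + p * (c * y ^ j * moment M Q 1 ^ (i+1))"
    using Suc.IH[of i] Suc.IH[of "i+1"] Suc.prems p unfolding F_def c_def y_def
    by (intro add_mono mult_left_mono) auto
  moreover have "(1 - p) * (c * y ^ j * moment M Q 1 ^ i) + p * (c * y ^ j * moment M Q 1 ^ (i+1))
      = c * y ^ Suc j * moment M Q 1 ^ i"
    unfolding y_def by (simp add: algebra_simps)
  ultimately show ?case unfolding c_def y_def by simp
qed

text \<open>Telescoping \<open>1 - x\<^sup>n = (1 - x)(1 + x + \<dots> + x\<^sup>n\<^sup>-\<^sup>1)\<close> with \<open>x = 1 - p + p Q\<close>:
  the probability of at least one delivery in \<open>n\<close> slots, \<open>1 - E (1-p+pQ)\<^sup>n\<close>, is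
  \<open>p \<Sum>\<^sub>j\<^sub><\<^sub>n E (1-Q)(1-p+pQ)\<^sup>j\<close> (delivery happens for the first time in slot \<open>j+1\<close>).\<close>
lemma delivery_expansion:
  assumes p: "0 \<le> p" "p \<le> 1"
  shows "1 - (\<integral>x. (1 - p + p * Q x) ^ n \<partial>M)
           = p * (\<Sum>j<n. \<integral>x. (1 - Q x) * (1 - p + p * Q x) ^ j \<partial>M)"
proof -
  have "integrable M (\<lambda>x. (1 - p + p * Q x) ^ n)"
    by (rule integrable_fun_of_Q[of "\<lambda>t. (1 - p + p * t) ^ n" 1, simplified])
      (use affine_unit_range[OF p] in \<open>auto intro!: power_le_one simp: abs_le_iff\<close>)
  then have "1 - (\<integral>x. (1 - p + p * Q x) ^ n \<partial>M) = (\<integral>x. 1 - (1 - p + p * Q x) ^ n \<partial>M)"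
    by (simp add: prob_space)
  also have "\<dots> = (\<integral>x. (\<Sum>j<n. p * ((1 - Q x) * (1 - p + p * Q x) ^ j)) \<partial>M)"
  proof (intro Bochner_Integration.integral_cong refl)
    fix x
    have "1 - (1 - p + p * Q x) ^ n = (1 - (1 - p + p * Q x)) * (\<Sum>j<n. (1 - p + p * Q x) ^ j)"
      by (rule one_diff_power_eq)
    then show "1 - (1 - p + p * Q x) ^ n = (\<Sum>j<n. p * ((1 - Q x) * (1 - p + p * Q x) ^ j))"
      by (simp add: sum_distrib_left algebra_simps)
  qed
  also have "\<dots> = p * (\<Sum>j<n. \<integral>x. (1 - Q x) * (1 - p + p * Q x) ^ j \<partial>M)"
    using integrable_mixed[OF p, of _ 0]
    by (subst Bochner_Integration.integral_sum) (auto simp: sum_distrib_left)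
  finally show ?thesis .
qed

text \<open>With \<open>q = E Q\<close>, \<open>y = 1 - p + p q\<close> and \<open>c\<close> the
  conditional success probability, the two previous lemmas and a geometric sum give
  \<open>1 - E (1-p+pQ)\<^sup>D\<^sup>+\<^sup>1 \<ge> p c \<Sum>\<^sub>j\<^sub>\<le>\<^sub>D y\<^sup>j = c (1 - y\<^sup>D\<^sup>+\<^sup>1) / (1 - q)\<close>.\<close>
lemma retransmission_moment_bound:
  assumes p: "0 < p" "p \<le> 1"
  shows "(\<integral>x. (1 - Q x) * Q x ^ D \<partial>M) / (\<integral>x. Q x ^ D \<partial>M) *
           (1 - (p * (\<integral>x. Q x \<partial>M) + 1 - p) ^ (D+1)) / (1 - (\<integral>x. Q x \<partial>M))
         \<le> 1 - (\<integral>x. (1 - p + p * Q x) ^ (D+1) \<partial>M)"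
proof -
  define q where "q = moment M Q 1"
  define y where "y = p * q + 1 - p"
  define c where "c = (moment M Q D - moment M Q (D+1)) / moment M Q D"
  have q_eq: "(\<integral>x. Q x \<partial>M) = q" by (simp add: q_def moment_def)
  have num_eq: "(\<integral>x. (1 - Q x) * Q x ^ D \<partial>M) = moment M Q D - moment M Q (D+1)"
    using moment_diff[of D] by simp
  have q_le_1: "q \<le> 1" using moment_Suc_le[of 0] moment_0 by (simp add: q_def)
  note expansion = delivery_expansion[OF less_imp_le[OF p(1)] p(2), of "D+1"]
  have "c * (1 - y ^ (D+1)) / (1 - q) \<le> 1 - (\<integral>x. (1 - p + p * Q x) ^ (D+1) \<partial>M)"
  proof (cases "moment M Q D = 0 \<or> q = 1")
    case True
    then have "c * (1 - y ^ (D+1)) / (1 - q) = 0" by (auto simp: c_def)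
    also have "0 \<le> 1 - (\<integral>x. (1 - p + p * Q x) ^ (D+1) \<partial>M)"
      unfolding expansion using p Q_range affine_unit_range[OF less_imp_le[OF p(1)] p(2)]
      by (intro mult_nonneg_nonneg sum_nonneg integral_nonneg_AE AE_I2) auto
    finally show ?thesis .
  next
    case False
    then have pos: "0 < moment M Q D" and "q \<noteq> 1"
      using moment_nonneg[of D] by auto
    have "1 - y ^ (D+1) = (1 - y) * (\<Sum>j<D+1. y ^ j)" by (rule one_diff_power_eq)
    also have "1 - y = p * (1 - q)" unfolding y_def by (simp add: algebra_simps)
    finally have "c * (1 - y ^ (D+1)) / (1 - q) = c * p * (\<Sum>j<D+1. y ^ j)"
      using \<open>q \<noteq> 1\<close> by simp
    also have "\<dots> = p * (\<Sum>j<D+1. c * y ^ j)"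
      by (simp add: sum_distrib_left mult_ac del: sum.lessThan_Suc power_Suc)
    also have "\<dots> \<le> p * (\<Sum>j<D+1. \<integral>x. (1 - Q x) * (1 - p + p * Q x) ^ j \<partial>M)"
      using mixed_moment_lower[OF pos less_imp_le[OF p(1)] p(2), of 0] p
      unfolding c_def y_def q_def by (intro mult_left_mono sum_mono) (auto simp: algebra_simps)
    finally show ?thesis unfolding expansion .
  qed
  then show ?thesis
    unfolding num_eq q_eq unfolding c_def y_def by (simp add: moment_def)
qed

end

end

lemma gen_events_Int_stable: "Int_stable (gen_events M N f)"
  unfolding Int_stable_def
proof (intro ballI)
  fix a b assume "a \<in> gen_events M N f" "b \<in> gen_events M N f"
  then obtain B B' where "a = f -` B \<inter> space M" "B \<in> sets N" "b = f -` B' \<inter> space M" "B' \<in> sets N"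
    unfolding gen_events_def by auto
  then show "a \<inter> b \<in> gen_events M N f" unfolding gen_events_def
    by (intro CollectI exI[of _ "B \<inter> B'"]) auto
qed

lemma gen_events_Pow: "gen_events M N f \<subseteq> Pow (space M)"
  unfolding gen_events_def by auto

lemma (in prob_space) nn_integral_indep_pair:
  assumes rv: "random_variable N1 U" "random_variable N2 W"
    and indep: "distr M N1 U \<Otimes>\<^sub>M distr M N2 W = distr M (N1 \<Otimes>\<^sub>M N2) (\<lambda>x. (U x, W x))"
    and k[measurable]: "k \<in> borel_measurable (N1 \<Otimes>\<^sub>M N2)"
  shows "(\<integral>\<^sup>+w. k (U w, W w) \<partial>M) = (\<integral>\<^sup>+u. \<integral>\<^sup>+v. k (u, v) \<partial>distr M N2 W \<partial>distr M N1 U)"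
proof -
  interpret W: prob_space "distr M N2 W" by (rule prob_space_distr) fact
  have "(\<integral>\<^sup>+w. k (U w, W w) \<partial>M) = (\<integral>\<^sup>+x. k x \<partial>distr M (N1 \<Otimes>\<^sub>M N2) (\<lambda>x. (U x, W x)))"
    using rv by (subst nn_integral_distr) (auto intro: measurable_Pair)
  also have "\<dots> = (\<integral>\<^sup>+x. k x \<partial>(distr M N1 U \<Otimes>\<^sub>M distr M N2 W))" unfolding indep ..
  also have "\<dots> = (\<integral>\<^sup>+u. \<integral>\<^sup>+v. k (u, v) \<partial>distr M N2 W \<partial>distr M N1 U)"
    by (rule W.nn_integral_fst[symmetric])
      (simp add: measurable_cong_sets[OF sets_pair_measure_cong[OF sets_distr sets_distr]])
  finally show ?thesis .
qed

lemma (in prob_space) indep_sets_reindex: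
  assumes ind: "indep_sets F UNIV" and inj: "inj_on f I"
  shows "indep_sets (\<lambda>i. F (f i)) I"
  unfolding indep_sets_def
proof (intro conjI ballI allI impI)
  fix i assume "i \<in> I"
  then show "F (f i) \<subseteq> events" using ind unfolding indep_sets_def by auto
next
  fix J Af assume J: "J \<subseteq> I" "J \<noteq> {}" "finite J" and Af: "Af \<in> (\<Pi> j\<in>J. F (f j))"
  define B where "B k = Af (the_inv_into J f k)" for k
  have injJ: "inj_on f J" by (rule inj_on_subset[OF inj J(1)])
  have Bf: "B (f j) = Af j" if "j \<in> J" for j
    unfolding B_def using the_inv_into_f_f[OF injJ that] by simp
  have "prob (\<Inter>k\<in>f ` J. B k) = (\<Prod>k\<in>f ` J. prob (B k))"
    using indep_setsD[OF ind, of "f ` J" B] J Af Bf by auto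
  moreover have "(\<Inter>k\<in>f ` J. B k) = (\<Inter>j\<in>J. Af j)" using Bf by auto
  moreover have "(\<Prod>k\<in>f ` J. prob (B k)) = (\<Prod>j\<in>J. prob (Af j))"
    using Bf by (simp add: prod.reindex[OF injJ])
  ultimately show "prob (\<Inter>j\<in>J. Af j) = (\<Prod>j\<in>J. prob (Af j))" by simp
qed

section \<open>The single-hop model\<close>

text \<open>Bookkeeping on the index type of the model variables: the slot a variable belongs to,
  moving a per-slot variable to another slot, and the variables of slot 0 that enter the
  SIR (the signal fading and, for every point, its ALOHA indicator and interference
  fading).  The SIR of slot \<open>t\<close> is the same function of \<open>\<Phi>\<close> and of the slot-\<open>t\<close> copies
  of these variables.\<close>

fun slot_of :: "rv_idx \<Rightarrow> nat option" where
  "slot_of Proc = None" | "slot_of (IndI n t) = Some t" | "slot_of (GI n t) = Some t"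
| "slot_of (HI t) = Some t" | "slot_of (AI t) = Some t"

fun move_to_slot :: "nat \<Rightarrow> rv_idx \<Rightarrow> rv_idx" where
  "move_to_slot t Proc = Proc" | "move_to_slot t (IndI n s) = IndI n t"
| "move_to_slot t (GI n s) = GI n t" | "move_to_slot t (HI s) = HI t" | "move_to_slot t (AI s) = AI t"

definition slot0_vars :: "rv_idx set" where
  "slot0_vars = insert (HI 0) (range (\<lambda>n. IndI n 0) \<union> range (\<lambda>n. GI n 0))"

definition slot_vars :: "nat \<Rightarrow> rv_idx set" where
  "slot_vars t = {j. slot_of j = Some t}"

lemma slot0_vars_mem[simp]: "HI 0 \<in> slot0_vars" "IndI n 0 \<in> slot0_vars" "GI n 0 \<in> slot0_vars"
  by (auto simp: slot0_vars_def)

lemma inj_on_move_to_slot: "inj_on (move_to_slot t) slot0_vars"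
  by (auto simp: inj_on_def slot0_vars_def)

lemma slot_of_move_to_slot: "j \<in> slot0_vars \<Longrightarrow> slot_of (move_to_slot t j) = Some t"
  by (auto simp: slot0_vars_def)

locale single_hop = prob_space M for M :: "'a measure" +
  fixes lam p :: real and X :: "nat \<Rightarrow> 'a \<Rightarrow> real \<times> real"
    and Ind :: "nat \<Rightarrow> nat \<Rightarrow> 'a \<Rightarrow> bool" and G :: "nat \<Rightarrow> nat \<Rightarrow> 'a \<Rightarrow> real"
    and H :: "nat \<Rightarrow> 'a \<Rightarrow> real" and A :: "nat \<Rightarrow> 'a \<Rightarrow> bool"
  assumes model: "single_hop_model M lam p X Ind G H A"
begin

definition var_events :: "rv_idx \<Rightarrow> 'a set set" where
  "var_events = (\<lambda>i. case i of
          Proc \<Rightarrow> gen_events M (PiM UNIV (\<lambda>_. borel)) (\<lambda>w n. X n w)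
        | IndI n t \<Rightarrow> gen_events M (count_space UNIV) (Ind n t)
        | GI n t \<Rightarrow> gen_events M borel (G n t)
        | HI t \<Rightarrow> gen_events M borel (H t)
        | AI t \<Rightarrow> gen_events M (count_space UNIV) (A t))"

lemma indep_var_events: "indep_sets var_events UNIV"
  using model unfolding single_hop_model_def var_events_def by auto

lemma var_events_Pow: "var_events j \<subseteq> Pow (space M)"
  unfolding var_events_def by (cases j) (auto simp: gen_events_Pow)

lemma var_events_Int_stable: "Int_stable (var_events j)"
  unfolding var_events_def by (cases j) (auto simp: gen_events_Int_stable)

lemma X_meas[measurable]: "(\<lambda>w n. X n w) \<in> measurable M (PiM UNIV (\<lambda>_. borel))"
  using model unfolding single_hop_model_def by auto

lemma Ind_meas[measurable]: "Ind n t \<in> measurable M (count_space UNIV)"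
  using model unfolding single_hop_model_def by auto

lemma A_meas[measurable]: "A t \<in> measurable M (count_space UNIV)"
  using model unfolding single_hop_model_def by auto

lemma G_distr: "distributed M lborel (G n t) (\<lambda>x. ennreal (exponential_density 1 x))"
  using model unfolding single_hop_model_def by auto

lemma H_distr: "distributed M lborel (H t) (\<lambda>x. ennreal (exponential_density 1 x))"
  using model unfolding single_hop_model_def by auto

lemma G_meas[measurable]: "G n t \<in> borel_measurable M"
  using G_distr[of n t] unfolding distributed_def by (simp add: measurable_lborel2)

lemma H_meas[measurable]: "H t \<in> borel_measurable M"
  using H_distr[of t] unfolding distributed_def by (simp add: measurable_lborel2)

definition gen_sigma :: "rv_idx set \<Rightarrow> 'a measure" where
  "gen_sigma S = sigma (space M) (\<Union>j\<in>S. var_events j)"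

lemma space_gen_sigma[simp]: "space (gen_sigma S) = space M"
  unfolding gen_sigma_def by (rule space_measure_of) (use var_events_Pow in auto)

lemma sets_gen_sigma: "sets (gen_sigma S) = sigma_sets (space M) (\<Union>j\<in>S. var_events j)"
  unfolding gen_sigma_def by (rule sets_measure_of) (use var_events_Pow in auto)

lemma measurable_from_gen_sigma: "f \<in> measurable (gen_sigma S) N \<Longrightarrow> f \<in> measurable M N"
proof -
  have "sets (gen_sigma S) \<subseteq> sets M"
    unfolding sets_gen_sigma using indep_var_events unfolding indep_sets_def
    by (intro sets.sigma_sets_subset) auto
  then show "f \<in> measurable (gen_sigma S) N \<Longrightarrow> f \<in> measurable M N"
    using measurable_mono[of N N "gen_sigma S" M] by auto
qed

lemma var_events_gen_sigma: "j \<in> S \<Longrightarrow> var_events j \<subseteq> sets (gen_sigma S)"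
  unfolding sets_gen_sigma by auto

lemma gen_sigma_indep:
  assumes "S \<inter> S' = {}" "a \<in> sets (gen_sigma S)" "b \<in> sets (gen_sigma S')"
  shows "prob (a \<inter> b) = prob a * prob b"
proof -
  let ?I = "case_bool S S'"
  have ind: "indep_sets (\<lambda>b. sigma_sets (space M) (\<Union>i\<in>?I b. var_events i)) UNIV"
  proof (rule indep_sets_collect_sigma)
    show "indep_sets var_events (\<Union>j\<in>UNIV. ?I j)"
      by (rule indep_sets_mono_index[OF _ indep_var_events]) auto
    show "Int_stable (var_events i)" for i by (rule var_events_Int_stable)
    show "disjoint_family_on ?I UNIV" using assms(1)
      by (auto simp: disjoint_family_on_def split: bool.split)
  qed
  have "indep_set (sets (gen_sigma S)) (sets (gen_sigma S'))"
    unfolding indep_set_def sets_gen_sigma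
    by (rule indep_sets_cong[THEN iffD1, OF refl _ ind]) (auto split: bool.split)
  then show ?thesis using assms(2,3) unfolding indep_sets2_eq by blast
qed

lemma gen_sigma_pair_law:
  assumes "S \<inter> S' = {}" and f: "f \<in> measurable (gen_sigma S) N" and g: "g \<in> measurable (gen_sigma S') N'"
  shows "distr M N f \<Otimes>\<^sub>M distr M N' g = distr M (N \<Otimes>\<^sub>M N') (\<lambda>x. (f x, g x))"
proof -
  have rvs: "random_variable N f" "random_variable N' g"
    using f g by (auto intro: measurable_from_gen_sigma)
  then have fg: "random_variable (N \<Otimes>\<^sub>M N') (\<lambda>x. (f x, g x))"
    by (rule measurable_Pair)
  interpret F: prob_space "distr M N f" by (rule prob_space_distr) fact
  interpret G: prob_space "distr M N' g" by (rule prob_space_distr) fact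
  show ?thesis
  proof (rule pair_measure_eqI)
    show "sigma_finite_measure (distr M N f)" "sigma_finite_measure (distr M N' g)" ..
    fix A B assume A: "A \<in> sets (distr M N f)" and B: "B \<in> sets (distr M N' g)"
    have a: "f -` A \<inter> space M \<in> sets (gen_sigma S)" using f A by (auto simp: measurable_def)
    have b: "g -` B \<inter> space M \<in> sets (gen_sigma S')" using g B by (auto simp: measurable_def)
    have "emeasure (distr M (N \<Otimes>\<^sub>M N') (\<lambda>x. (f x, g x))) (A \<times> B)
        = emeasure M ((f -` A \<inter> space M) \<inter> (g -` B \<inter> space M))"
      using A B by (subst emeasure_distr[OF fg]) (auto intro!: arg_cong2[where f=emeasure])
    also have "\<dots> = emeasure M (f -` A \<inter> space M) * emeasure M (g -` B \<inter> space M)"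
      using gen_sigma_indep[OF assms(1) a b]
      by (simp add: emeasure_eq_measure measure_nonneg ennreal_mult)
    also have "\<dots> = emeasure (distr M N f) A * emeasure (distr M N' g) B"
      using rvs A B by (simp add: emeasure_distr)
    finally show "emeasure (distr M N f) A * emeasure (distr M N' g) B
        = emeasure (distr M (N \<Otimes>\<^sub>M N') (\<lambda>x. (f x, g x))) (A \<times> B)" by simp
  qed simp
qed

definition coord :: "rv_idx \<Rightarrow> 'a \<Rightarrow> real" where
  "coord j w = (case j of Proc \<Rightarrow> 0 | IndI n t \<Rightarrow> of_bool (Ind n t w) | GI n t \<Rightarrow> G n t w
     | HI t \<Rightarrow> H t w | AI t \<Rightarrow> of_bool (A t w))"

lemma coord_var_events: "j \<noteq> Proc \<Longrightarrow> B \<in> sets borel \<Longrightarrow> coord j -` B \<inter> space M \<in> var_events j"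
proof (cases j)
  case (IndI n t)
  then show ?thesis unfolding var_events_def gen_events_def coord_def
    by (auto intro!: exI[of _ "of_bool -` B"])
next
  case (AI t)
  then show ?thesis unfolding var_events_def gen_events_def coord_def
    by (auto intro!: exI[of _ "of_bool -` B"])
qed (auto simp: var_events_def gen_events_def coord_def)

lemma coord_meas[measurable]: "coord j \<in> borel_measurable M"
  unfolding coord_def by (cases j) auto

lemma coord_gen_sigma: "j \<in> S \<Longrightarrow> j \<noteq> Proc \<Longrightarrow> coord j \<in> borel_measurable (gen_sigma S)"
  unfolding measurable_def using coord_var_events by (auto intro: subsetD[OF var_events_gen_sigma])

lemma coord_simps: "coord (HI t) = H t" "coord (IndI n t) = (\<lambda>w. of_bool (Ind n t w))"
  "coord (GI n t) = G n t"
  by (auto simp: coord_def fun_eq_iff)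

definition conf_space :: "(nat \<Rightarrow> real \<times> real) measure" where
  "conf_space = PiM UNIV (\<lambda>_. borel)"

definition points :: "'a \<Rightarrow> nat \<Rightarrow> real \<times> real" where
  "points w = (\<lambda>n. X n w)"

abbreviation point_law :: "(nat \<Rightarrow> real \<times> real) measure" where
  "point_law \<equiv> distr M conf_space points"

lemma points_meas[measurable]: "points \<in> measurable M conf_space"
  unfolding points_def conf_space_def by (rule X_meas)

lemma points_gen_sigma: "Proc \<in> S \<Longrightarrow> points \<in> measurable (gen_sigma S) conf_space"
  unfolding measurable_def using measurable_space[OF points_meas] var_events_gen_sigma[of Proc S]
  unfolding points_def conf_space_def by (auto simp: var_events_def gen_events_def)

lemma A_gen_sigma: "AI t \<in> S \<Longrightarrow> A t \<in> measurable (gen_sigma S) (count_space UNIV)"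
  unfolding measurable_def using var_events_gen_sigma[of "AI t" S]
  by (auto simp: var_events_def gen_events_def)

text \<open>The marks of slot \<open>t\<close> (signal fading, ALOHA indicators and interference fadings),
  indexed by the corresponding slot-0 indices, and the full data of slot \<open>t\<close>: its marks
  together with the transmission decision \<open>A t\<close>.\<close>
definition mark_space :: "(rv_idx \<Rightarrow> real) measure" where
  "mark_space = PiM slot0_vars (\<lambda>_. borel)"

definition marks :: "nat \<Rightarrow> 'a \<Rightarrow> rv_idx \<Rightarrow> real" where
  "marks t w = (\<lambda>j\<in>slot0_vars. coord (move_to_slot t j) w)"

lemma marks_apply: "marks t w (HI 0) = H t w" "marks t w (IndI n 0) = of_bool (Ind n t w)"
  "marks t w (GI n 0) = G n t w"
  by (simp_all add: marks_def coord_def)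

lemma marks_gen_sigma:
  "(\<And>j. j \<in> slot0_vars \<Longrightarrow> move_to_slot t j \<in> S) \<Longrightarrow> marks t \<in> measurable (gen_sigma S) mark_space"
  unfolding marks_def mark_space_def
  by (intro measurable_restrict coord_gen_sigma) (auto simp: slot0_vars_def)

lemma marks_meas[measurable]: "marks t \<in> measurable M mark_space"
  unfolding marks_def mark_space_def by (intro measurable_restrict coord_meas)

definition slot_space :: "((rv_idx \<Rightarrow> real) \<times> bool) measure" where
  "slot_space = mark_space \<Otimes>\<^sub>M count_space UNIV"

definition slot_data :: "nat \<Rightarrow> 'a \<Rightarrow> (rv_idx \<Rightarrow> real) \<times> bool" where
  "slot_data t w = (marks t w, A t w)"

abbreviation slot_law :: "nat \<Rightarrow> ((rv_idx \<Rightarrow> real) \<times> bool) measure" where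
  "slot_law t \<equiv> distr M slot_space (slot_data t)"

lemma slot_data_gen_sigma: "slot_vars t \<subseteq> S \<Longrightarrow> slot_data t \<in> measurable (gen_sigma S) slot_space"
  unfolding slot_data_def slot_space_def
  by (intro measurable_Pair marks_gen_sigma A_gen_sigma)
    (auto simp: slot_vars_def slot_of_move_to_slot)

lemma slot_data_meas[measurable]: "slot_data t \<in> measurable M slot_space"
  unfolding slot_data_def slot_space_def by measurable

subsection \<open>Conditional independence of the slots given the point process\<close>

definition history_space :: "nat set \<Rightarrow> ((nat \<Rightarrow> real \<times> real) \<times> (nat \<Rightarrow> (rv_idx \<Rightarrow> real) \<times> bool)) measure" where
  "history_space T = conf_space \<Otimes>\<^sub>M PiM T (\<lambda>_. slot_space)"

definition history :: "nat set \<Rightarrow> 'a \<Rightarrow> (nat \<Rightarrow> real \<times> real) \<times> (nat \<Rightarrow> (rv_idx \<Rightarrow> real) \<times> bool)" where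
  "history T w = (points w, \<lambda>s\<in>T. slot_data s w)"

lemma history_meas[measurable]: "history T \<in> measurable M (history_space T)"
  unfolding history_def history_space_def by (intro measurable_Pair points_meas measurable_restrict slot_data_meas)

text \<open>The data of a slot outside \<open>T\<close> is independent of the history of \<open>T\<close>, since the two are
  generated by disjoint groups of model variables.\<close>
lemma law_history_slot:
  assumes "t \<notin> T"
  shows "distr M (history_space T) (history T) \<Otimes>\<^sub>M slot_law t
       = distr M (history_space T \<Otimes>\<^sub>M slot_space) (\<lambda>w. (history T w, slot_data t w))"
proof (rule gen_sigma_pair_law)
  show "history T \<in> measurable (gen_sigma (insert Proc (\<Union>s\<in>T. slot_vars s))) (history_space T)"
    unfolding history_def history_space_def
    by (intro measurable_Pair points_gen_sigma measurable_restrict slot_data_gen_sigma) auto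
  show "slot_data t \<in> measurable (gen_sigma (slot_vars t)) slot_space"
    by (rule slot_data_gen_sigma) simp
  show "insert Proc (\<Union>s\<in>T. slot_vars s) \<inter> slot_vars t = {}"
    using assms by (auto simp: slot_vars_def)
qed

lemma measurable_prod_slots:
  fixes h :: "nat \<Rightarrow> (nat \<Rightarrow> real \<times> real) \<Rightarrow> (rv_idx \<Rightarrow> real) \<times> bool \<Rightarrow> ennreal"
  assumes h: "\<And>s. s \<in> T \<Longrightarrow> case_prod (h s) \<in> borel_measurable (conf_space \<Otimes>\<^sub>M slot_space)"
  shows "(\<lambda>u. \<Prod>s\<in>T. h s (fst u) (snd u s)) \<in> borel_measurable (history_space T)"
proof (rule borel_measurable_prod_ennreal)
  fix s assume s: "s \<in> T"
  have "(\<lambda>u. (fst u, snd u s)) \<in> measurable (history_space T) (conf_space \<Otimes>\<^sub>M slot_space)"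
    using s unfolding history_space_def
    by (intro measurable_Pair measurable_fst'' measurable_snd'') (auto intro!: measurable_component_singleton)
  from measurable_compose[OF this h[OF s]]
  show "(\<lambda>u. h s (fst u) (snd u s)) \<in> borel_measurable (history_space T)" by simp
qed

lemma measurable_nn_integral_slot:
  assumes "case_prod h \<in> borel_measurable (conf_space \<Otimes>\<^sub>M slot_space)"
  shows "(\<lambda>\<phi>. \<integral>\<^sup>+z. h \<phi> z \<partial>slot_law t) \<in> borel_measurable conf_space"
proof -
  interpret slot: prob_space "slot_law t" by (rule prob_space_distr[OF slot_data_meas])
  show ?thesis
    using assms by (intro slot.borel_measurable_nn_integral)
      (simp add: measurable_cong_sets[OF sets_pair_measure_cong[OF refl sets_distr]])
qed

lemma nn_integral_new_slot:
  assumes "t \<notin> T"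
    and F[measurable]: "F \<in> borel_measurable (history_space T)"
    and h[measurable]: "case_prod h \<in> borel_measurable (conf_space \<Otimes>\<^sub>M slot_space)"
  shows "(\<integral>\<^sup>+w. F (history T w) * h (points w) (slot_data t w) \<partial>M)
       = (\<integral>\<^sup>+w. F (history T w) * (\<integral>\<^sup>+z. h (points w) z \<partial>slot_law t) \<partial>M)"
proof -
  let ?H = "distr M (history_space T) (history T)"
  have fst_fst: "(\<lambda>x. (fst (fst x), snd x)) \<in> measurable (history_space T \<Otimes>\<^sub>M slot_space) (conf_space \<Otimes>\<^sub>M slot_space)"
    unfolding history_space_def by (intro measurable_Pair measurable_fst'[OF measurable_fst] measurable_snd)
  have "(\<lambda>x. h (fst (fst x)) (snd x)) \<in> borel_measurable (history_space T \<Otimes>\<^sub>M slot_space)"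
    using measurable_compose[OF fst_fst h] by simp
  then have k: "(\<lambda>x. F (fst x) * h (fst (fst x)) (snd x)) \<in> borel_measurable (history_space T \<Otimes>\<^sub>M slot_space)"
    by (intro borel_measurable_times_ennreal measurable_compose[OF measurable_fst F])
  have h_int[measurable]: "(\<lambda>\<phi>. \<integral>\<^sup>+z. h \<phi> z \<partial>slot_law t) \<in> borel_measurable conf_space"
    by (rule measurable_nn_integral_slot[OF h])
  have "(\<integral>\<^sup>+w. F (history T w) * h (points w) (slot_data t w) \<partial>M)
      = (\<integral>\<^sup>+u. \<integral>\<^sup>+z. F u * h (fst u) z \<partial>slot_law t \<partial>?H)"
    using nn_integral_indep_pair[OF history_meas slot_data_meas law_history_slot[OF assms(1)] k]
    by (simp add: history_def)
  also have "\<dots> = (\<integral>\<^sup>+u. F u * (\<integral>\<^sup>+z. h (fst u) z \<partial>slot_law t) \<partial>?H)"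
  proof (rule nn_integral_cong)
    fix u assume "u \<in> space ?H"
    then have "(\<lambda>z. h (fst u) z) \<in> borel_measurable (slot_law t)"
      by (simp add: history_space_def space_pair_measure)
    then show "(\<integral>\<^sup>+z. F u * h (fst u) z \<partial>slot_law t) = F u * (\<integral>\<^sup>+z. h (fst u) z \<partial>slot_law t)"
      by (rule nn_integral_cmult)
  qed
  also have "\<dots> = (\<integral>\<^sup>+w. F (history T w) * (\<integral>\<^sup>+z. h (points w) z \<partial>slot_law t) \<partial>M)"
  proof -
    have "(\<lambda>u. F u * (\<integral>\<^sup>+z. h (fst u) z \<partial>slot_law t)) \<in> borel_measurable (history_space T)"
      by (intro borel_measurable_times_ennreal F measurable_compose[OF _ h_int])
        (simp add: history_space_def)
    then show ?thesis by (subst nn_integral_distr) (auto simp: history_def)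
  qed
  finally show ?thesis .
qed

lemma nn_integral_slots_given_points:
  fixes h :: "nat \<Rightarrow> (nat \<Rightarrow> real \<times> real) \<Rightarrow> (rv_idx \<Rightarrow> real) \<times> bool \<Rightarrow> ennreal"
  assumes "finite T"
    and h: "\<And>t. t \<in> T \<Longrightarrow> case_prod (h t) \<in> borel_measurable (conf_space \<Otimes>\<^sub>M slot_space)"
    and "\<psi> \<in> borel_measurable conf_space"
  shows "(\<integral>\<^sup>+w. \<psi> (points w) * (\<Prod>t\<in>T. h t (points w) (slot_data t w)) \<partial>M) =
    (\<integral>\<^sup>+\<phi>. \<psi> \<phi> * (\<Prod>t\<in>T. \<integral>\<^sup>+z. h t \<phi> z \<partial>slot_law t) \<partial>point_law)"
  using assms
proof (induction T arbitrary: \<psi> rule: finite_induct)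
  case empty
  then show ?case by (simp add: nn_integral_distr)
next
  case (insert t T)
  have hT: "\<And>s. s \<in> T \<Longrightarrow> case_prod (h s) \<in> borel_measurable (conf_space \<Otimes>\<^sub>M slot_space)"
    using insert.prems(1) by auto
  have ht: "case_prod (h t) \<in> borel_measurable (conf_space \<Otimes>\<^sub>M slot_space)"
    using insert.prems(1) by auto
  define F where "F u = \<psi> (fst u) * (\<Prod>s\<in>T. h s (fst u) (snd u s))" for u
  define \<psi>' where "\<psi>' \<phi> = \<psi> \<phi> * (\<integral>\<^sup>+z. h t \<phi> z \<partial>slot_law t)" for \<phi>
  have F: "F \<in> borel_measurable (history_space T)"
  proof -
    have "(\<lambda>u. \<psi> (fst u)) \<in> borel_measurable (history_space T)"
      unfolding history_space_def using insert.prems(2) by measurable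
    then show ?thesis
      unfolding F_def using measurable_prod_slots[OF hT] by (rule borel_measurable_times_ennreal)
  qed
  have \<psi>': "\<psi>' \<in> borel_measurable conf_space"
    unfolding \<psi>'_def by (intro borel_measurable_times_ennreal insert.prems(2) measurable_nn_integral_slot ht)
  have "(\<integral>\<^sup>+w. \<psi> (points w) * (\<Prod>s\<in>insert t T. h s (points w) (slot_data s w)) \<partial>M)
      = (\<integral>\<^sup>+w. F (history T w) * h t (points w) (slot_data t w) \<partial>M)"
    using insert.hyps by (intro nn_integral_cong) (simp add: F_def history_def mult_ac)
  also have "\<dots> = (\<integral>\<^sup>+w. F (history T w) * (\<integral>\<^sup>+z. h t (points w) z \<partial>slot_law t) \<partial>M)"
    by (rule nn_integral_new_slot[OF insert.hyps(2) F ht])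
  also have "\<dots> = (\<integral>\<^sup>+w. \<psi>' (points w) * (\<Prod>s\<in>T. h s (points w) (slot_data s w)) \<partial>M)"
    using insert.hyps by (intro nn_integral_cong) (simp add: F_def \<psi>'_def history_def mult_ac)
  also have "\<dots> = (\<integral>\<^sup>+\<phi>. \<psi>' \<phi> * (\<Prod>s\<in>T. \<integral>\<^sup>+z. h s \<phi> z \<partial>slot_law s) \<partial>point_law)"
    by (rule insert.IH[OF hT \<psi>'])
  also have "\<dots> = (\<integral>\<^sup>+\<phi>. \<psi> \<phi> * (\<Prod>s\<in>insert t T. \<integral>\<^sup>+z. h s \<phi> z \<partial>slot_law s) \<partial>point_law)"
    using insert.hyps by (simp add: \<psi>'_def mult_ac)
  finally show ?case .
qed

lemma prob_all_slots:
  fixes R :: "nat \<Rightarrow> (nat \<Rightarrow> real \<times> real) \<Rightarrow> (rv_idx \<Rightarrow> real) \<times> bool \<Rightarrow> bool"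
    and g :: "nat \<Rightarrow> (nat \<Rightarrow> real \<times> real) \<Rightarrow> real"
  assumes T: "finite T"
    and R: "\<And>t. t \<in> T \<Longrightarrow> Measurable.pred (conf_space \<Otimes>\<^sub>M slot_space) (\<lambda>x. R t (fst x) (snd x))"
    and g_law: "\<And>t \<phi>. t \<in> T \<Longrightarrow> \<phi> \<in> space conf_space \<Longrightarrow>
       emeasure (slot_law t) {z \<in> space slot_space. R t \<phi> z} = ennreal (g t \<phi>)"
    and g_meas: "\<And>t. t \<in> T \<Longrightarrow> g t \<in> borel_measurable conf_space"
    and g_nonneg: "\<And>t \<phi>. t \<in> T \<Longrightarrow> \<phi> \<in> space conf_space \<Longrightarrow> 0 \<le> g t \<phi>"
  defines "E \<equiv> {w \<in> space M. \<forall>t\<in>T. R t (points w) (slot_data t w)}"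
  shows "E \<in> events" and "prob E = (\<integral>\<phi>. (\<Prod>t\<in>T. g t \<phi>) \<partial>point_law)"
proof -
  have R_w: "Measurable.pred M (\<lambda>w. R t (points w) (slot_data t w))" if "t \<in> T" for t
    using measurable_compose[OF measurable_Pair[OF points_meas slot_data_meas] R[OF that]] by simp
  show E: "E \<in> events"
    unfolding E_def using R_w T by measurable
  define h where "h t \<phi> z = (if R t \<phi> z then 1 else 0 :: ennreal)" for t \<phi> z
  have h_meas: "case_prod (h t) \<in> borel_measurable (conf_space \<Otimes>\<^sub>M slot_space)" if "t \<in> T" for t
  proof -
    have "(\<lambda>x. h t (fst x) (snd x)) \<in> borel_measurable (conf_space \<Otimes>\<^sub>M slot_space)"
      unfolding h_def using R[OF that] by measurable
    then show ?thesis by (simp add: case_prod_beta')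
  qed
  have h_integral: "(\<integral>\<^sup>+z. h t \<phi> z \<partial>slot_law t) = ennreal (g t \<phi>)"
    if t: "t \<in> T" and \<phi>: "\<phi> \<in> space conf_space" for t \<phi>
  proof -
    have "{z \<in> space slot_space. R t \<phi> z} \<in> sets slot_space"
      using measurable_compose[OF measurable_Pair1'[OF \<phi>] R[OF t]] by (simp add: pred_def)
    moreover have "(\<integral>\<^sup>+z. h t \<phi> z \<partial>slot_law t)
        = (\<integral>\<^sup>+z. indicator {z \<in> space slot_space. R t \<phi> z} z \<partial>slot_law t)"
      by (intro nn_integral_cong) (auto simp: h_def indicator_def)
    ultimately show ?thesis using g_law[OF t \<phi>] by simp
  qed
  have prod_h: "(\<Prod>t\<in>T. h t \<phi> (z t)) = (if \<forall>t\<in>T. R t \<phi> (z t) then 1 else 0)" for \<phi> z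
    using T by (induction T rule: finite_induct) (auto simp: h_def)
  have "emeasure M E = (\<integral>\<^sup>+w. 1 * (\<Prod>t\<in>T. h t (points w) (slot_data t w)) \<partial>M)"
    using E by (simp add: prod_h[of _ "\<lambda>t. slot_data t _", simplified] indicator_def E_def of_bool_def
      flip: nn_integral_indicator cong: nn_integral_cong_simp)
  also have "\<dots> = (\<integral>\<^sup>+\<phi>. 1 * (\<Prod>t\<in>T. \<integral>\<^sup>+z. h t \<phi> z \<partial>slot_law t) \<partial>point_law)"
    by (rule nn_integral_slots_given_points[OF T h_meas]) auto
  also have "\<dots> = (\<integral>\<^sup>+\<phi>. ennreal (\<Prod>t\<in>T. g t \<phi>) \<partial>point_law)"
    using g_nonneg by (intro nn_integral_cong) (simp add: h_integral prod_ennreal)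
  finally have "prob E = enn2real (\<integral>\<^sup>+\<phi>. ennreal (\<Prod>t\<in>T. g t \<phi>) \<partial>point_law)"
    unfolding measure_def by simp
  also have "\<dots> = (\<integral>\<phi>. (\<Prod>t\<in>T. g t \<phi>) \<partial>point_law)"
    using g_nonneg g_meas
    by (intro enn2real_nn_integral_eq_integral) (auto intro!: prod_nonneg borel_measurable_prod)
  finally show "prob E = (\<integral>\<phi>. (\<Prod>t\<in>T. g t \<phi>) \<partial>point_law)" .
qed

lemma coord_law_move:
  assumes "j \<in> slot0_vars"
  shows "distr M borel (coord (move_to_slot t j)) = distr M borel (coord (move_to_slot s j))"
proof -
  have exp_law: "distr M borel Y = density lborel (\<lambda>x. ennreal (exponential_density 1 x))"
    if "distributed M lborel Y (\<lambda>x. ennreal (exponential_density 1 x))" for Y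
  proof -
    have "distr M borel Y = distr M lborel Y"
      using that unfolding distributed_def by (intro distr_cong) auto
    then show ?thesis using that unfolding distributed_def by simp
  qed
  have ind_law: "distr M borel (\<lambda>w. of_bool (Ind n t w) :: real) = distr (measure_pmf (bernoulli_pmf p)) borel of_bool" for n t
  proof -
    have "distr (distr M (count_space UNIV) (Ind n t)) borel (of_bool :: bool \<Rightarrow> real)
        = distr M borel (of_bool \<circ> Ind n t)"
      by (rule distr_distr) auto
    moreover have "distr M (count_space UNIV) (Ind n t) = measure_pmf (bernoulli_pmf p)"
      using model unfolding single_hop_model_def by auto
    ultimately show ?thesis by (simp add: comp_def)
  qed
  show ?thesis
    using assms exp_law[OF H_distr] exp_law[OF G_distr] ind_law
    unfolding slot0_vars_def by (auto simp: coord_simps)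
qed

lemma indep_coords_slot: "indep_vars (\<lambda>_. borel) (\<lambda>j. coord (move_to_slot t j)) slot0_vars"
  unfolding indep_vars_def2
proof
  show "\<forall>i\<in>slot0_vars. random_variable borel (coord (move_to_slot t i))" by simp
  have "indep_sets (\<lambda>i. var_events (move_to_slot t i)) slot0_vars"
    by (rule indep_sets_reindex[OF indep_var_events inj_on_move_to_slot])
  then show "indep_sets (\<lambda>i. {coord (move_to_slot t i) -` A \<inter> space M |A. A \<in> sets borel}) slot0_vars"
  proof (rule indep_sets_mono_sets)
    fix i assume "i \<in> slot0_vars"
    then have "move_to_slot t i \<noteq> Proc" by (auto simp: slot0_vars_def)
    then show "{coord (move_to_slot t i) -` A \<inter> space M |A. A \<in> sets borel} \<subseteq> var_events (move_to_slot t i)"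
      using coord_var_events by auto
  qed
qed

text \<open>The marks of a slot are independent with slot-independent marginals, hence the law
  of the marks does not depend on the slot.\<close>
lemma law_marks_eq: "distr M mark_space (marks t) = distr M mark_space (marks s)"
proof -
  have law: "distr M mark_space (marks t) = PiM slot0_vars (\<lambda>j. distr M borel (coord (move_to_slot t j)))"
    for t
  proof -
    have "slot0_vars \<noteq> {}" by (auto simp: slot0_vars_def)
    from indep_vars_iff_distr_eq_PiM[OF this, where M'="\<lambda>_. borel" and X="\<lambda>j. coord (move_to_slot t j)"] indep_coords_slot
    show ?thesis unfolding mark_space_def marks_def by simp
  qed
  show ?thesis unfolding law by (intro PiM_cong refl coord_law_move)
qed

definition mark_law :: "(rv_idx \<Rightarrow> real) measure" where
  "mark_law = distr M mark_space (marks 1)"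

lemma prob_space_mark_law: "prob_space mark_law"
  unfolding mark_law_def by (rule prob_space_distr) simp

lemma sets_mark_law[simp]: "sets mark_law = sets mark_space"
  and space_mark_law[simp]: "space mark_law = space mark_space"
  unfolding mark_law_def by auto

text \<open>Within a slot the marks are independent of the transmission decision; so every slot
  has the law \<open>mark_law \<Otimes> Bernoulli(p)\<close>.\<close>
lemma law_slot_data: "slot_law t = mark_law \<Otimes>\<^sub>M measure_pmf (bernoulli_pmf p)"
proof -
  have "distr M mark_space (marks t) \<Otimes>\<^sub>M distr M (count_space UNIV) (A t)
      = distr M (mark_space \<Otimes>\<^sub>M count_space UNIV) (\<lambda>x. (marks t x, A t x))"
  proof (rule gen_sigma_pair_law)
    show "(slot_vars t - {AI t}) \<inter> {AI t} = {}" by auto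
    show "marks t \<in> measurable (gen_sigma (slot_vars t - {AI t})) mark_space"
      by (rule marks_gen_sigma) (auto simp: slot0_vars_def slot_vars_def)
    show "A t \<in> measurable (gen_sigma {AI t}) (count_space UNIV)" by (rule A_gen_sigma) simp
  qed
  moreover have "distr M (count_space UNIV) (A t) = measure_pmf (bernoulli_pmf p)"
    using model unfolding single_hop_model_def by auto
  ultimately show ?thesis
    unfolding slot_space_def slot_data_def mark_law_def using law_marks_eq[of t 1] by simp
qed

definition slot_success :: "real \<Rightarrow> real \<Rightarrow> real \<Rightarrow> (nat \<Rightarrow> real \<times> real) \<Rightarrow> (rv_idx \<Rightarrow> real) \<Rightarrow> bool" where
  "slot_success \<alpha> \<beta> d \<phi> v \<longleftrightarrow> ennreal \<beta> \<le> ennreal (d powr (- \<alpha>) * v (HI 0)) /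
     (\<Sum>n. ennreal (if v (IndI n 0) = 1 then norm (\<phi> n) powr (- \<alpha>) * v (GI n 0) else 0))"

lemma SIR_success_iff:
  "ennreal \<beta> \<le> SIR \<alpha> d X Ind G H t w \<longleftrightarrow> slot_success \<alpha> \<beta> d (points w) (fst (slot_data t w))"
  unfolding slot_success_def SIR_def interference_def points_def slot_data_def
  by (simp add: marks_apply cong: if_cong)

lemma pred_slot_success_pair: "Measurable.pred (conf_space \<Otimes>\<^sub>M mark_space) (\<lambda>x. slot_success \<alpha> \<beta> d (fst x) (snd x))"
proof -
  have [measurable]: "(\<lambda>x. snd x j) \<in> borel_measurable (conf_space \<Otimes>\<^sub>M mark_space)" if "j \<in> slot0_vars" for j
    using that unfolding mark_space_def by (intro measurable_compose[OF measurable_snd measurable_component_singleton])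
  have [measurable]: "(\<lambda>x. fst x n) \<in> borel_measurable (conf_space \<Otimes>\<^sub>M mark_space)" for n
    unfolding conf_space_def by (intro measurable_compose[OF measurable_fst measurable_component_singleton]) auto
  show ?thesis unfolding slot_success_def by measurable
qed

lemma pred_slot_success[measurable (raw)]:
  assumes "f \<in> measurable N conf_space" "g \<in> measurable N mark_space"
  shows "Measurable.pred N (\<lambda>x. slot_success \<alpha> \<beta> d (f x) (g x))"
  using measurable_compose[OF measurable_Pair[OF assms] pred_slot_success_pair] by simp

text \<open>The conditional failure probability of a slot given \<open>\<Phi> = \<phi>\<close>; the random variable
  \<open>Q(\<Phi>)\<close> of the proof idea.\<close>
definition fail_prob :: "real \<Rightarrow> real \<Rightarrow> real \<Rightarrow> (nat \<Rightarrow> real \<times> real) \<Rightarrow> real" where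
  "fail_prob \<alpha> \<beta> d \<phi> = measure mark_law {v \<in> space mark_space. \<not> slot_success \<alpha> \<beta> d \<phi> v}"

lemma fail_prob_meas: "fail_prob \<alpha> \<beta> d \<in> borel_measurable conf_space"
proof -
  interpret mark_law: prob_space mark_law by (rule prob_space_mark_law)
  define S where "S = {x \<in> space (conf_space \<Otimes>\<^sub>M mark_space). \<not> slot_success \<alpha> \<beta> d (fst x) (snd x)}"
  have S: "S \<in> sets (conf_space \<Otimes>\<^sub>M mark_law)" unfolding S_def
    by (subst sets_pair_measure_cong[OF refl sets_mark_law]) measurable
  have "(\<lambda>x. enn2real (emeasure mark_law (Pair x -` S))) \<in> borel_measurable conf_space"
    by (intro borel_measurable_enn2real mark_law.measurable_emeasure_Pair S)
  moreover have "Pair x -` S = {v \<in> space mark_space. \<not> slot_success \<alpha> \<beta> d x v}" if "x \<in> space conf_space" for x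
    using that by (auto simp: S_def space_pair_measure)
  ultimately show ?thesis unfolding fail_prob_def measure_def
    by (subst measurable_cong[where g="\<lambda>x. enn2real (emeasure mark_law (Pair x -` S))"]) auto
qed

lemma fail_prob_range: "0 \<le> fail_prob \<alpha> \<beta> d \<phi> \<and> fail_prob \<alpha> \<beta> d \<phi> \<le> 1"
proof -
  interpret mark_law: prob_space mark_law by (rule prob_space_mark_law)
  show ?thesis unfolding fail_prob_def by auto
qed

lemma law_slot_outcomes:
  assumes \<phi>: "\<phi> \<in> space conf_space"
  shows "emeasure (slot_law t) {z \<in> space slot_space. \<not> slot_success \<alpha> \<beta> d \<phi> (fst z)}
           = ennreal (fail_prob \<alpha> \<beta> d \<phi>)"
    and "emeasure (slot_law t) {z \<in> space slot_space. slot_success \<alpha> \<beta> d \<phi> (fst z)}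
           = ennreal (1 - fail_prob \<alpha> \<beta> d \<phi>)"
    and "0 \<le> p \<Longrightarrow> p \<le> 1 \<Longrightarrow>
         emeasure (slot_law t) {z \<in> space slot_space. \<not> (snd z \<and> slot_success \<alpha> \<beta> d \<phi> (fst z))}
           = ennreal (1 - p + p * fail_prob \<alpha> \<beta> d \<phi>)"
proof -
  interpret mark_law: prob_space mark_law by (rule prob_space_mark_law)
  let ?P = "mark_law \<Otimes>\<^sub>M measure_pmf (bernoulli_pmf p)"
  define B where "B = {v \<in> space mark_space. slot_success \<alpha> \<beta> d \<phi> v}"
  define Bc where "Bc = {v \<in> space mark_space. \<not> slot_success \<alpha> \<beta> d \<phi> v}"
  have B: "B \<in> sets mark_space" "Bc \<in> sets mark_space"
    unfolding B_def Bc_def using \<phi> by measurable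
  have q: "measure mark_law Bc = fail_prob \<alpha> \<beta> d \<phi>" by (simp add: fail_prob_def Bc_def)
  have "Bc = space mark_law - B" by (auto simp: B_def Bc_def)
  then have compl: "measure mark_law B = 1 - measure mark_law Bc"
    using B mark_law.prob_compl[of B] by simp
  have q01: "0 \<le> measure mark_law Bc" "measure mark_law Bc \<le> 1"
    using mark_law.prob_le_1[of Bc] by simp_all
  have "{z \<in> space slot_space. \<not> slot_success \<alpha> \<beta> d \<phi> (fst z)} = Bc \<times> UNIV"
    by (auto simp: slot_space_def space_pair_measure Bc_def)
  then show "emeasure (slot_law t) {z \<in> space slot_space. \<not> slot_success \<alpha> \<beta> d \<phi> (fst z)}
           = ennreal (fail_prob \<alpha> \<beta> d \<phi>)"
    using B unfolding law_slot_data q[symmetric]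
    by (simp add: measure_pmf.emeasure_pair_measure_Times mark_law.emeasure_eq_measure)
  have "{z \<in> space slot_space. slot_success \<alpha> \<beta> d \<phi> (fst z)} = B \<times> UNIV"
    by (auto simp: slot_space_def space_pair_measure B_def)
  then show "emeasure (slot_law t) {z \<in> space slot_space. slot_success \<alpha> \<beta> d \<phi> (fst z)}
           = ennreal (1 - fail_prob \<alpha> \<beta> d \<phi>)"
    using B unfolding law_slot_data q[symmetric] compl[symmetric]
    by (simp add: measure_pmf.emeasure_pair_measure_Times mark_law.emeasure_eq_measure)
  assume p: "0 \<le> p" "p \<le> 1"
  have "{z \<in> space slot_space. \<not> (snd z \<and> slot_success \<alpha> \<beta> d \<phi> (fst z))} = Bc \<times> UNIV \<union> B \<times> {False}"
    by (auto simp: slot_space_def space_pair_measure B_def Bc_def)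
  moreover have "emeasure ?P (Bc \<times> UNIV \<union> B \<times> {False}) = emeasure ?P (Bc \<times> UNIV) + emeasure ?P (B \<times> {False})"
    using B by (intro plus_emeasure[symmetric]) (auto simp: B_def Bc_def)
  moreover have "\<dots> = ennreal (measure mark_law Bc) + ennreal (measure mark_law B) * ennreal (1 - p)"
    using B p by (simp add: measure_pmf.emeasure_pair_measure_Times mark_law.emeasure_eq_measure emeasure_pmf_single)
  moreover have "\<dots> = ennreal (measure mark_law Bc + measure mark_law B * (1 - p))"
    using q01 p unfolding compl by (simp add: ennreal_mult ennreal_plus)
  moreover have "measure mark_law Bc + measure mark_law B * (1 - p) = 1 - p + p * measure mark_law Bc"
    unfolding compl by (simp add: algebra_simps)
  ultimately show "emeasure (slot_law t) {z \<in> space slot_space. \<not> (snd z \<and> slot_success \<alpha> \<beta> d \<phi> (fst z))}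
           = ennreal (1 - p + p * fail_prob \<alpha> \<beta> d \<phi>)"
    unfolding law_slot_data q by simp
qed

lemma pred_slot_outcome:
  shows "Measurable.pred (conf_space \<Otimes>\<^sub>M slot_space) (\<lambda>x. slot_success \<alpha> \<beta> d (fst x) (fst (snd x)))"
    and "Measurable.pred (conf_space \<Otimes>\<^sub>M slot_space) (\<lambda>x. \<not> slot_success \<alpha> \<beta> d (fst x) (fst (snd x)))"
    and "Measurable.pred (conf_space \<Otimes>\<^sub>M slot_space)
     (\<lambda>x. \<not> (snd (snd x) \<and> slot_success \<alpha> \<beta> d (fst x) (fst (snd x))))"
proof -
  have marks: "(\<lambda>x. fst (snd x)) \<in> measurable (conf_space \<Otimes>\<^sub>M slot_space) mark_space"
    unfolding slot_space_def by (intro measurable_compose[OF measurable_snd measurable_fst])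
  have decision: "Measurable.pred (conf_space \<Otimes>\<^sub>M slot_space) (\<lambda>x. snd (snd x))"
    unfolding slot_space_def by (intro measurable_compose[OF measurable_snd measurable_snd])
  show success: "Measurable.pred (conf_space \<Otimes>\<^sub>M slot_space) (\<lambda>x. slot_success \<alpha> \<beta> d (fst x) (fst (snd x)))"
    by (rule pred_slot_success[OF measurable_fst marks])
  show "Measurable.pred (conf_space \<Otimes>\<^sub>M slot_space) (\<lambda>x. \<not> slot_success \<alpha> \<beta> d (fst x) (fst (snd x)))"
    by (rule pred_intros_logic(2)[OF success])
  show "Measurable.pred (conf_space \<Otimes>\<^sub>M slot_space)
     (\<lambda>x. \<not> (snd (snd x) \<and> slot_success \<alpha> \<beta> d (fst x) (fst (snd x))))"
    by (rule pred_intros_logic(2)[OF pred_intros_logic(3)[OF decision success]])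
qed

lemma prob_fail_slots:
  assumes "finite T"
  shows "prob {w \<in> space M. \<forall>t\<in>T. \<not> ennreal \<beta> \<le> SIR \<alpha> d X Ind G H t w}
       = (\<integral>\<phi>. fail_prob \<alpha> \<beta> d \<phi> ^ card T \<partial>point_law)"
proof -
  have "prob {w \<in> space M. \<forall>t\<in>T. \<not> slot_success \<alpha> \<beta> d (points w) (fst (slot_data t w))}
      = (\<integral>\<phi>. (\<Prod>t\<in>T. fail_prob \<alpha> \<beta> d \<phi>) \<partial>point_law)"
    using pred_slot_outcome(2) fail_prob_range
    by (intro prob_all_slots(2)[OF assms]) (auto simp: law_slot_outcomes(1) fail_prob_meas)
  then show ?thesis by (simp add: SIR_success_iff)
qed

lemma prob_success_after_failures:
  "prob {w \<in> space M. ennreal \<beta> \<le> SIR \<alpha> d X Ind G H (D+1) w \<and>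
                      (\<forall>t\<in>{1..D}. \<not> ennreal \<beta> \<le> SIR \<alpha> d X Ind G H t w)}
     = (\<integral>\<phi>. (1 - fail_prob \<alpha> \<beta> d \<phi>) * fail_prob \<alpha> \<beta> d \<phi> ^ D \<partial>point_law)"
proof -
  define R where "R t \<phi> z \<longleftrightarrow> (if t = D + 1 then slot_success \<alpha> \<beta> d \<phi> (fst z)
    else \<not> slot_success \<alpha> \<beta> d \<phi> (fst z))" for t \<phi> and z :: "(rv_idx \<Rightarrow> real) \<times> bool"
  define g where "g t = (if t = D + 1 then (\<lambda>\<phi>. 1 - fail_prob \<alpha> \<beta> d \<phi>) else fail_prob \<alpha> \<beta> d)" for t
  have prob_R: "prob {w \<in> space M. \<forall>t\<in>{1..D+1}. R t (points w) (slot_data t w)}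
      = (\<integral>\<phi>. (\<Prod>t\<in>{1..D+1}. g t \<phi>) \<partial>point_law)"
  proof (rule prob_all_slots(2))
    show "Measurable.pred (conf_space \<Otimes>\<^sub>M slot_space) (\<lambda>x. R t (fst x) (snd x))" for t
      using pred_slot_outcome(1,2) by (cases "t = D + 1") (simp_all add: R_def)
    show "emeasure (slot_law t) {z \<in> space slot_space. R t \<phi> z} = ennreal (g t \<phi>)"
      if "\<phi> \<in> space conf_space" for t \<phi>
      using law_slot_outcomes[OF that] by (cases "t = D + 1") (simp_all add: R_def g_def)
    show "g t \<in> borel_measurable conf_space" for t
      using fail_prob_meas by (cases "t = D + 1") (simp_all add: g_def)
    show "0 \<le> g t \<phi>" for t \<phi>
      using fail_prob_range by (cases "t = D + 1") (simp_all add: g_def)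
  qed simp
  have prod_g: "(\<Prod>t\<in>{1..D+1}. g t \<phi>) = (1 - fail_prob \<alpha> \<beta> d \<phi>) * fail_prob \<alpha> \<beta> d \<phi> ^ D" for \<phi>
  proof -
    have "{1..D+1} = insert (D+1) {1..D}" by auto
    then have "(\<Prod>t\<in>{1..D+1}. g t \<phi>) = g (D+1) \<phi> * (\<Prod>t\<in>{1..D}. g t \<phi>)" by simp
    also have "(\<Prod>t\<in>{1..D}. g t \<phi>) = (\<Prod>t\<in>{1..D}. fail_prob \<alpha> \<beta> d \<phi>)"
      by (intro prod.cong) (auto simp: g_def)
    finally show ?thesis by (simp add: g_def)
  qed
  have events_R: "{w \<in> space M. ennreal \<beta> \<le> SIR \<alpha> d X Ind G H (D+1) w \<and>
                      (\<forall>t\<in>{1..D}. \<not> ennreal \<beta> \<le> SIR \<alpha> d X Ind G H t w)}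
      = {w \<in> space M. \<forall>t\<in>{1..D+1}. R t (points w) (slot_data t w)}"
    by (auto simp: R_def SIR_success_iff)
  show ?thesis unfolding events_R prob_R by (simp only: prod_g)
qed

lemma prob_delivery:
  assumes "0 \<le> p" "p \<le> 1"
  shows "prob {w \<in> space M. \<exists>t\<in>{1..D+1}. A t w \<and> ennreal \<beta> \<le> SIR \<alpha> d X Ind G H t w}
       = 1 - (\<integral>\<phi>. (1 - p + p * fail_prob \<alpha> \<beta> d \<phi>) ^ (D+1) \<partial>point_law)"
proof -
  define R where "R t \<phi> z \<longleftrightarrow> \<not> (snd z \<and> slot_success \<alpha> \<beta> d \<phi> (fst z))"
    for t :: nat and \<phi> and z :: "(rv_idx \<Rightarrow> real) \<times> bool"
  define g where "g t \<phi> = 1 - p + p * fail_prob \<alpha> \<beta> d \<phi>" for t :: nat and \<phi>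
  define C where "C = {w \<in> space M. \<forall>t\<in>{1..D+1}. R t (points w) (slot_data t w)}"
  have pred: "Measurable.pred (conf_space \<Otimes>\<^sub>M slot_space) (\<lambda>x. R t (fst x) (snd x))" for t
    unfolding R_def by (rule pred_slot_outcome(3))
  have law: "emeasure (slot_law t) {z \<in> space slot_space. R t \<phi> z} = ennreal (g t \<phi>)"
    if "\<phi> \<in> space conf_space" for t \<phi>
    unfolding R_def g_def by (rule law_slot_outcomes(3)[OF that assms])
  have meas: "g t \<in> borel_measurable conf_space" for t
    unfolding g_def using fail_prob_meas by measurable
  have nonneg: "0 \<le> g t \<phi>" for t \<phi>
    unfolding g_def using affine_unit_range(1)[OF assms] fail_prob_range by simp
  have C: "C \<in> events" "prob C = (\<integral>\<phi>. (\<Prod>t\<in>{1..D+1}. g t \<phi>) \<partial>point_law)"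
    unfolding C_def using prob_all_slots[of "{1..D+1}" R g, OF finite_atLeastAtMost pred law meas nonneg] by auto
  have "{w \<in> space M. \<exists>t\<in>{1..D+1}. A t w \<and> ennreal \<beta> \<le> SIR \<alpha> d X Ind G H t w} = space M - C"
    by (auto simp: C_def R_def SIR_success_iff slot_data_def)
  then show ?thesis using prob_compl[OF C(1)] C(2) by (simp add: g_def)
qed

end


text \<open>Insert the four moment representations into the analytic bound, applied to
  \<open>Q = fail_prob \<alpha> \<beta> d\<close> on the law of \<open>\<Phi>\<close>.  The bound holds for every choice of the
  path-loss exponent, threshold, distance and intensity.\<close>

theorem proposition4:
  fixes M :: "'a measure" and \<alpha> \<beta> d p lam :: real and D :: nat
    and X :: "nat \<Rightarrow> 'a \<Rightarrow> real \<times> real"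
    and Ind :: "nat \<Rightarrow> nat \<Rightarrow> 'a \<Rightarrow> bool" and G :: "nat \<Rightarrow> nat \<Rightarrow> 'a \<Rightarrow> real"
    and H :: "nat \<Rightarrow> 'a \<Rightarrow> real" and A :: "nat \<Rightarrow> 'a \<Rightarrow> bool"
  assumes "\<alpha> > 2" and "\<beta> > 0" and "d > 0" and "0 < p" and "p \<le> 1" and "lam > 0"
    and model: "single_hop_model M lam p X Ind G H A"
  defines "ok \<equiv> \<lambda>t w. SIR \<alpha> d X Ind G H t w \<ge> ennreal \<beta>"
  defines "q \<equiv> measure M {w \<in> space M. \<not> ok 1 w}"
  defines "Ps \<equiv> measure M {w \<in> space M. \<exists>t\<in>{1..D+1}. A t w \<and> ok t w}"
  defines "cond \<equiv> measure M {w \<in> space M. ok (D+1) w \<and> (\<forall>t\<in>{1..D}. \<not> ok t w)}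
                   / measure M {w \<in> space M. \<forall>t\<in>{1..D}. \<not> ok t w}"
  shows "Ps \<ge> cond * (1 - (p * q + 1 - p) ^ (D + 1)) / (1 - q)"
proof -
  have "prob_space M"
    using model unfolding single_hop_model_def by (rule conjunct1)
  then interpret single_hop M lam p X Ind G H A
    using model by (intro single_hop.intro single_hop_axioms.intro)
  interpret Phi: prob_space point_law by (rule prob_space_distr) simp
  let ?Q = "fail_prob \<alpha> \<beta> d"
  have Q_meas: "?Q \<in> borel_measurable point_law"
    using fail_prob_meas by simp
  have q: "q = (\<integral>\<phi>. ?Q \<phi> \<partial>point_law)"
    using prob_fail_slots[of "{1}"] unfolding q_def ok_def by simp
  have denominator: "measure M {w \<in> space M. \<forall>t\<in>{1..D}. \<not> ok t w} = (\<integral>\<phi>. ?Q \<phi> ^ D \<partial>point_law)"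
    using prob_fail_slots[of "{1..D}"] unfolding ok_def by simp
  have numerator: "measure M {w \<in> space M. ok (D+1) w \<and> (\<forall>t\<in>{1..D}. \<not> ok t w)}
      = (\<integral>\<phi>. (1 - ?Q \<phi>) * ?Q \<phi> ^ D \<partial>point_law)"
    using prob_success_after_failures unfolding ok_def .
  have delivery: "Ps = 1 - (\<integral>\<phi>. (1 - p + p * ?Q \<phi>) ^ (D+1) \<partial>point_law)"
    using prob_delivery[of D] \<open>0 < p\<close> \<open>p \<le> 1\<close> unfolding Ps_def ok_def by simp
  show ?thesis
    unfolding cond_def numerator denominator q delivery
    by (rule Phi.retransmission_moment_bound[OF Q_meas fail_prob_range \<open>0 < p\<close> \<open>p \<le> 1\<close>])
qed

end
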